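(* Let $n\ge1$ players all have the same valuation $v$ on a finite set of goods $M$. Then every leximin++ solution is EFX. That is, any allocation $A$ for which there is no allocation $B$ with $A\prec_{++}B$ is EFX. In particular, an EFX allocation always exists for identical general valuations.
   Context: A valuation is a function $v:2^M\to\mathbb{R}_{\ge0}$ with $v(\emptyset)=0$ that is monotone: $v(S)\le v(T)$ whenever $S\subseteq T$. An allocation is an ordered partition $(A_1,\dots,A_n)$ of $M$; parts may be empty. It is EFX if for all players $i,j$ and every $g\in A_j$ we have $v_i(A_i)\ge v_i(A_j\setminus\{g\})$. For an allocation $A$, let $X^A$ be the ordering of the players by increasing utility $v_i(A_i)$, with ties broken by increasing player index. The leximin++ comparison is defined as follows. For allocations $A$ and $B$, scan $\ell=1,\dots,n$, and let $i=X^A_\ell$ and $j=X^B_\ell$. - If $v_i(A_i)\ne v_j(B_j)$, stop: $A\prec_{++}B$ holds if and only if $v_i(A_i)<v_j(B_j)$. - Otherwise, if $|A_i|\ne|B_j|$, stop: $A\prec_{++}B$ holds if and only if $|A_i|<|B_j|$. - Otherwise continue to $\ell+1$. If the scan finishes without stopping, then $A\prec_{++}B$ is false. A leximin++ solution is an allocation $A$ that is maximal for this comparison: there is no allocation $B$ with $A\prec_{++}B$. *)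

theory Defs
  imports Complex_Main "HOL-Library.Product_Lexorder"
begin

definition valuation :: "'g set \<Rightarrow> ('g set \<Rightarrow> real) \<Rightarrow> bool" where
  "valuation M v \<longleftrightarrow> v {} = 0 \<and> (\<forall>S. S \<subseteq> M \<longrightarrow> v S \<ge> 0)
     \<and> (\<forall>S T. S \<subseteq> T \<and> T \<subseteq> M \<longrightarrow> v S \<le> v T)"

definition is_allocation :: "nat \<Rightarrow> 'g set \<Rightarrow> (nat \<Rightarrow> 'g set) \<Rightarrow> bool" where
  "is_allocation n M A \<longleftrightarrow> (\<forall>i\<in>{1..n}. A i \<subseteq> M)
     \<and> (\<forall>i\<in>{1..n}. \<forall>j\<in>{1..n}. i \<noteq> j \<longrightarrow> A i \<inter> A j = {})
     \<and> (\<Union>i\<in>{1..n}. A i) = M"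

definition is_EFX :: "nat \<Rightarrow> ('g set \<Rightarrow> real) \<Rightarrow> (nat \<Rightarrow> 'g set) \<Rightarrow> bool" where
  "is_EFX n v A \<longleftrightarrow> (\<forall>i\<in>{1..n}. \<forall>j\<in>{1..n}. \<forall>g\<in>A j. v (A i) \<ge> v (A j - {g}))"

text \<open>X^A: players ordered by increasing utility, ties broken by increasing index.\<close>
definition player_order :: "nat \<Rightarrow> ('g set \<Rightarrow> real) \<Rightarrow> (nat \<Rightarrow> 'g set) \<Rightarrow> nat list" where
  "player_order n v A = sort_key (\<lambda>i. (v (A i), i)) [1..<n+1]"

fun scan_less :: "(real \<times> nat) list \<Rightarrow> (real \<times> nat) list \<Rightarrow> bool" where
  "scan_less ((a, s) # xs) ((b, t) # ys) =
     (if a \<noteq> b then a < b else if s \<noteq> t then s < t else scan_less xs ys)"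
| "scan_less _ _ = False"

definition leximinpp_less ::
  "nat \<Rightarrow> ('g set \<Rightarrow> real) \<Rightarrow> (nat \<Rightarrow> 'g set) \<Rightarrow> (nat \<Rightarrow> 'g set) \<Rightarrow> bool" where
  "leximinpp_less n v A B \<longleftrightarrow>
     scan_less (map (\<lambda>i. (v (A i), card (A i))) (player_order n v A))
               (map (\<lambda>j. (v (B j), card (B j))) (player_order n v B))"

definition leximinpp_solution ::
  "nat \<Rightarrow> 'g set \<Rightarrow> ('g set \<Rightarrow> real) \<Rightarrow> (nat \<Rightarrow> 'g set) \<Rightarrow> bool" where
  "leximinpp_solution n M v A \<longleftrightarrow> is_allocation n M A \<and>
     \<not> (\<exists>B. is_allocation n M B \<and> leximinpp_less n v A B)"

end

theory Submission
  imports Defs "HOL-Library.FuncSet"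
begin

text \<open>If EFX fails, some player j holds a good g whose removal still leaves j better off
  than a least-off player. Let i be the least-off player who comes last in the order X^A and
  move g from j to i. Every player ranked before i keeps its bundle, and every player from i
  onwards ends up strictly above i's old utility, except i itself, whose utility does not
  drop while its bundle grows. Hence the new allocation is larger for the leximin++
  comparison, so a leximin++ solution is EFX. Solutions exist because the comparison is a
  strict order that only sees the bundles of players 1..n, of which there are finitely
  many.\<close>

lemma insort_key_cong:
  "(\<And>y. y \<in> set (x # ys) \<Longrightarrow> f y = g y) \<Longrightarrow> insort_key f x ys = insort_key g x ys"
  by (induction ys) auto

lemma sort_key_cong:
  "(\<And>x. x \<in> set xs \<Longrightarrow> f x = g x) \<Longrightarrow> sort_key f xs = sort_key g xs"
proof (induction xs)
  case (Cons x xs)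
  then have "sort_key f (x # xs) = insort_key f x (sort_key g xs)" by simp
  also have "\<dots> = insort_key g x (sort_key g xs)"
    by (rule insort_key_cong) (use Cons.prems in auto)
  finally show ?case by simp
qed simp

lemma insort_key_append_below:
  fixes f :: "'a \<Rightarrow> 'b::linorder"
  assumes "\<forall>y\<in>set ys. f x \<le> f y"
  shows "insort_key f x (xs @ ys) = insort_key f x xs @ ys"
  using assms by (induction xs) (cases ys; auto)+

lemma insort_key_append_above:
  fixes f :: "'a \<Rightarrow> 'b::linorder"
  assumes "\<forall>y\<in>set xs. f y < f x"
  shows "insort_key f x (xs @ ys) = xs @ insort_key f x ys"
  using assms by (induction xs) auto

lemma sort_key_split_at:
  fixes f :: "'a \<Rightarrow> 'b::linorder"
  shows "sort_key f xs = sort_key f (filter (\<lambda>x. f x < t) xs) @ sort_key f (filter (\<lambda>x. \<not> f x < t) xs)"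
proof (induction xs)
  case (Cons x xs)
  show ?case
  proof (cases "f x < t")
    case True
    then have "\<forall>y\<in>set (sort_key f (filter (\<lambda>x. \<not> f x < t) xs)). f x \<le> f y" by auto
    then show ?thesis using True Cons by (simp add: insort_key_append_below)
  next
    case False
    then have "\<forall>y\<in>set (sort_key f (filter (\<lambda>x. f x < t) xs)). f y < f x" by auto
    then show ?thesis using False Cons by (simp add: insort_key_append_above)
  qed
qed simp

lemma sort_key_eq_Cons_if_min:
  fixes f :: "'a \<Rightarrow> 'b::linorder"
  assumes "x \<in> set xs" and "inj_on f (set xs)" and "\<And>y. y \<in> set xs \<Longrightarrow> f x \<le> f y"
  shows "\<exists>ys. sort_key f xs = x # ys"
proof -
  obtain h ys where h: "sort_key f xs = h # ys"
    using assms(1) by (metis empty_iff list.set(1) neq_Nil_conv set_sort)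
  have "h \<in> set xs" using h by (metis list.set_intros(1) set_sort)
  moreover have "f h \<le> f x"
  proof -
    have "x \<in> set (h # ys)" using assms(1) h by (metis set_sort)
    then show ?thesis using sorted_sort_key[of f xs] unfolding h by auto
  qed
  ultimately have "h = x" using assms by (metis antisym inj_onD)
  then show ?thesis using h by blast
qed

lemma scan_less_append_same: "scan_less (xs @ ys) (xs @ zs) = scan_less ys zs"
  by (induction xs) auto

lemma scan_less_irrefl: "\<not> scan_less xs xs"
  by (induction xs) auto

lemma scan_less_trans: "scan_less xs ys \<Longrightarrow> scan_less ys zs \<Longrightarrow> scan_less xs zs"
proof (induction xs arbitrary: ys zs)
  case (Cons p xs)
  obtain q ys' where ys: "ys = q # ys'" using Cons.prems by (cases ys) auto
  obtain r zs' where zs: "zs = r # zs'" using Cons.prems by (cases zs) auto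
  show ?case using Cons.prems Cons.IH[of ys' zs'] unfolding ys zs
    by (cases p; cases q; cases r) (auto split: if_splits)
qed simp

lemma scan_less_Cons_if_less: "p < q \<Longrightarrow> scan_less (p # xs) (q # ys)"
  by (cases p; cases q) auto

lemma finite_has_maximal_wrt_strict_order:
  assumes "finite S" "S \<noteq> {}" "\<And>x. \<not> P x x" "\<And>x y z. P x y \<Longrightarrow> P y z \<Longrightarrow> P x z"
  shows "\<exists>x\<in>S. \<forall>y\<in>S. \<not> P x y"
  using assms(1,2)
proof (induction S rule: finite_ne_induct)
  case (insert x F)
  then obtain m where "m \<in> F" "\<forall>y\<in>F. \<not> P m y" by auto
  then show ?case using assms(3,4) by (cases "P m x") blast+
qed (use assms(3) in auto)

lemma finite_has_last_minimiser:
  fixes f :: "'a::linorder \<Rightarrow> 'b::linorder"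
  assumes "finite I" "I \<noteq> {}"
  obtains i where "i \<in> I" "\<And>k. k \<in> I \<Longrightarrow> f i \<le> f k" "\<And>k. k \<in> I \<Longrightarrow> f k = f i \<Longrightarrow> k \<le> i"
proof -
  define m where "m = Min (f ` I)"
  have "m \<in> f ` I" unfolding m_def using assms by simp
  then have ne: "{k\<in>I. f k = m} \<noteq> {}" by auto
  define i where "i = Max {k\<in>I. f k = m}"
  have "i \<in> {k\<in>I. f k = m}" unfolding i_def using assms ne by (intro Max_in) auto
  then show ?thesis using that[of i] assms unfolding m_def i_def by auto
qed

lemma leximinpp_less_irrefl: "\<not> leximinpp_less n v A A"
  unfolding leximinpp_less_def by (rule scan_less_irrefl)

lemma leximinpp_less_trans:
  "leximinpp_less n v A B \<Longrightarrow> leximinpp_less n v B C \<Longrightarrow> leximinpp_less n v A C"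
  unfolding leximinpp_less_def by (rule scan_less_trans)

lemma leximinpp_less_cong_right:
  assumes "\<And>k. k \<in> {1..n} \<Longrightarrow> B k = B' k"
  shows "leximinpp_less n v A B \<longleftrightarrow> leximinpp_less n v A B'"
proof -
  have "player_order n v B = player_order n v B'"
    unfolding player_order_def using assms by (intro sort_key_cong) auto
  moreover have "set (player_order n v B') = {1..n}"
    unfolding player_order_def by auto
  ultimately have "map (\<lambda>k. (v (B k), card (B k))) (player_order n v B)
      = map (\<lambda>k. (v (B' k), card (B' k))) (player_order n v B')"
    using assms by (intro map_cong) auto
  then show ?thesis unfolding leximinpp_less_def by simp
qed

text \<open>The pivot i splits X^A into the players whose key (utility, index) lies below
  (v (A i), i), on which A and B agree, and the rest, which X^A lists starting with i; the
  scan therefore decides at i's position.\<close>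

lemma leximinpp_less_if_pivot_improved:
  fixes A B :: "nat \<Rightarrow> 'g set" and v :: "'g set \<Rightarrow> real"
  assumes i: "i \<in> {1..n}"
    and below: "\<And>k. k \<in> {1..n} \<Longrightarrow> (v (A k), k) < (v (A i), i) \<Longrightarrow> B k = A k"
    and above_stays: "\<And>k. k \<in> {1..n} \<Longrightarrow> \<not> (v (A k), k) < (v (A i), i) \<Longrightarrow> \<not> (v (B k), k) < (v (A i), i)"
    and above_better: "\<And>k. k \<in> {1..n} \<Longrightarrow> \<not> (v (A k), k) < (v (A i), i) \<Longrightarrow>
      (v (A i), card (A i)) < (v (B k), card (B k))"
  shows "leximinpp_less n v A B"
proof -
  define t where "t = (v (A i), i)"
  define xs where "xs = [1..<n+1]"
  define keyA where "keyA = (\<lambda>k. (v (A k), k))"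
  define keyB where "keyB = (\<lambda>k. (v (B k), k))"
  define scoreA where "scoreA = (\<lambda>k. (v (A k), card (A k)))"
  define scoreB where "scoreB = (\<lambda>k. (v (B k), card (B k)))"
  define low where "low = filter (\<lambda>k. keyA k < t) xs"
  have set_xs: "set xs = {1..n}" unfolding xs_def by auto
  have low_B: "filter (\<lambda>k. keyB k < t) xs = low"
    unfolding low_def using below above_stays
    by (intro filter_cong) (auto simp: set_xs keyA_def keyB_def t_def)
  have unchanged: "B k = A k" if "k \<in> set low" for k
    using that below unfolding low_def keyA_def t_def by (auto simp: set_xs)
  then have "sort_key keyB low = sort_key keyA low"
    unfolding keyA_def keyB_def by (intro sort_key_cong) auto
  then have low_scores: "map scoreB (sort_key keyB low) = map scoreA (sort_key keyA low)"
    using unchanged unfolding scoreA_def scoreB_def by (auto simp: set_sort)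
  obtain UA where UA: "sort_key keyA (filter (\<lambda>k. \<not> keyA k < t) xs) = i # UA"
    using sort_key_eq_Cons_if_min[of i "filter (\<lambda>k. \<not> keyA k < t) xs" keyA] i
    by (fastforce simp: set_xs keyA_def t_def inj_on_def)
  have "i \<in> set (filter (\<lambda>k. \<not> keyB k < t) xs)"
    using i above_stays[OF i] by (simp add: set_xs keyB_def t_def)
  then have "sort_key keyB (filter (\<lambda>k. \<not> keyB k < t) xs) \<noteq> []"
    by (metis empty_iff list.set(1) set_sort)
  then obtain x UB where UB: "sort_key keyB (filter (\<lambda>k. \<not> keyB k < t) xs) = x # UB"
    by (meson neq_Nil_conv)
  then have x: "x \<in> set (filter (\<lambda>k. \<not> keyB k < t) xs)"
    by (metis list.set_intros(1) set_sort)
  then have "\<not> keyA x < t"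
    using below unfolding keyA_def keyB_def t_def by (auto simp: set_xs)
  then have better: "scoreA i < scoreB x"
    using above_better x unfolding scoreA_def scoreB_def keyA_def t_def by (simp add: set_xs)
  have order_A: "player_order n v A = sort_key keyA low @ i # UA"
    unfolding player_order_def low_def UA[symmetric] xs_def[symmetric] keyA_def[symmetric]
    by (rule sort_key_split_at)
  have order_B: "player_order n v B = sort_key keyB low @ x # UB"
    unfolding player_order_def low_B[symmetric] UB[symmetric] xs_def[symmetric] keyB_def[symmetric]
    by (rule sort_key_split_at)
  have "leximinpp_less n v A B \<longleftrightarrow>
      scan_less (map scoreA (player_order n v A)) (map scoreB (player_order n v B))"
    unfolding leximinpp_less_def scoreA_def scoreB_def ..
  also have "\<dots> \<longleftrightarrow> scan_less (map scoreA (sort_key keyA low) @ scoreA i # map scoreA UA)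
      (map scoreA (sort_key keyA low) @ scoreB x # map scoreB UB)"
    using order_A order_B low_scores by simp
  also have "\<dots> \<longleftrightarrow> scan_less (scoreA i # map scoreA UA) (scoreB x # map scoreB UB)"
    by (rule scan_less_append_same)
  finally show ?thesis using better scan_less_Cons_if_less by blast
qed

lemma is_allocation_move_good:
  assumes A: "is_allocation n M A" and "i \<in> {1..n}" "j \<in> {1..n}" "i \<noteq> j" and g: "g \<in> A j"
  shows "is_allocation n M (A(i := insert g (A i), j := A j - {g}))" (is "is_allocation n M ?B")
proof -
  have sub: "\<And>k. k \<in> {1..n} \<Longrightarrow> A k \<subseteq> M"
    and disj: "\<And>k l. k \<in> {1..n} \<Longrightarrow> l \<in> {1..n} \<Longrightarrow> k \<noteq> l \<Longrightarrow> A k \<inter> A l = {}"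
    and cover: "(\<Union>k\<in>{1..n}. A k) = M"
    using A unfolding is_allocation_def by auto
  have g_only_j: "g \<notin> A k" if "k \<in> {1..n}" "k \<noteq> j" for k
    using disj[OF that(1) \<open>j \<in> {1..n}\<close> that(2)] g by blast
  have "?B k \<subseteq> M" if "k \<in> {1..n}" for k
    using sub[OF that] sub[OF \<open>j \<in> {1..n}\<close>] g by auto
  moreover have "?B k \<inter> ?B l = {}" if "k \<in> {1..n}" "l \<in> {1..n}" "k \<noteq> l" for k l
    using disj[OF that] g_only_j[OF that(1)] g_only_j[OF that(2)] \<open>i \<noteq> j\<close> \<open>k \<noteq> l\<close>
    by (cases "k = i"; cases "l = i"; cases "k = j"; cases "l = j") auto
  moreover have "(\<Union>k\<in>{1..n}. ?B k) = M"
  proof -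
    have "A k \<subseteq> (\<Union>k\<in>{1..n}. ?B k)" if "k \<in> {1..n}" for k
      using that \<open>i \<in> {1..n}\<close> \<open>i \<noteq> j\<close> by (cases "k = j") auto
    then have "M \<subseteq> (\<Union>k\<in>{1..n}. ?B k)" using cover by blast
    then show ?thesis using \<open>\<And>k. k \<in> {1..n} \<Longrightarrow> ?B k \<subseteq> M\<close> by blast
  qed
  ultimately show ?thesis unfolding is_allocation_def by blast
qed

lemma leximinpp_solution_exists:
  assumes "n \<ge> 1" "finite M"
  shows "\<exists>A. leximinpp_solution n M v A"
proof -
  define S where "S = {A \<in> {1..n} \<rightarrow>\<^sub>E Pow M. is_allocation n M A}"
  have restrict_in_S: "restrict B {1..n} \<in> S" if "is_allocation n M B" for B
    using that unfolding S_def is_allocation_def by auto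
  have "finite ({1..n} \<rightarrow>\<^sub>E Pow M)" using assms(2) by (simp add: finite_PiE)
  then have "finite S" unfolding S_def by (rule rev_finite_subset) blast
  have "is_allocation n M (\<lambda>k. if k = 1 then M else {})"
    using assms(1) unfolding is_allocation_def by auto
  then have "S \<noteq> {}" using restrict_in_S by blast
  then obtain A where "A \<in> S" and A: "\<forall>B\<in>S. \<not> leximinpp_less n v A B"
    using finite_has_maximal_wrt_strict_order[OF \<open>finite S\<close>]
      leximinpp_less_irrefl leximinpp_less_trans by metis
  have "\<not> leximinpp_less n v A B" if "is_allocation n M B" for B
    using A restrict_in_S[OF that] leximinpp_less_cong_right[of n B "restrict B {1..n}"] by auto
  then show ?thesis using \<open>A \<in> S\<close> unfolding leximinpp_solution_def S_def by blast
qed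

lemma not_leximinpp_solution_if_last_least_envies:
  assumes fin: "finite M" and val: "valuation M v" and alloc: "is_allocation n M A"
    and i: "i \<in> {1..n}" and least: "\<And>k. k \<in> {1..n} \<Longrightarrow> v (A i) \<le> v (A k)"
    and last: "\<And>k. k \<in> {1..n} \<Longrightarrow> v (A k) = v (A i) \<Longrightarrow> k \<le> i"
    and j: "j \<in> {1..n}" and g: "g \<in> A j" and envy: "v (A i) < v (A j - {g})"
  shows "\<not> leximinpp_solution n M v A"
proof -
  have sub: "\<And>k. k \<in> {1..n} \<Longrightarrow> A k \<subseteq> M" using alloc unfolding is_allocation_def by auto
  have mono: "\<And>S T. S \<subseteq> T \<Longrightarrow> T \<subseteq> M \<Longrightarrow> v S \<le> v T"
    using val unfolding valuation_def by auto
  have "v (A j - {g}) \<le> v (A j)" using sub[OF j] by (intro mono) auto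
  with envy have "v (A i) < v (A j)" by simp
  then have ij: "i \<noteq> j" by auto
  define B where "B = A(i := insert g (A i), j := A j - {g})"
  have Bi: "B i = insert g (A i)" and Bj: "B j = A j - {g}"
    and Bk: "\<And>k. k \<noteq> i \<Longrightarrow> k \<noteq> j \<Longrightarrow> B k = A k"
    unfolding B_def using ij by auto
  have "v (A i) \<le> v (B i)"
    unfolding Bi using sub[OF i] sub[OF j] g by (intro mono) auto
  have "g \<notin> A i" using alloc i j ij g unfolding is_allocation_def by blast
  then have "card (A i) < card (B i)"
    unfolding Bi using finite_subset[OF sub[OF i] fin] by simp
  have above: "v (A i) < v (B k)"
    if k: "k \<in> {1..n}" and "k \<noteq> i" and "\<not> (v (A k), k) < (v (A i), i)" for k
  proof (cases "k = j")
    case True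
    then show ?thesis using envy Bj by simp
  next
    case False
    have "v (A k) \<noteq> v (A i)" using last[OF k] that by force
    then show ?thesis using least[OF k] Bk[OF \<open>k \<noteq> i\<close> False] by simp
  qed
  have "leximinpp_less n v A B"
  proof (intro leximinpp_less_if_pivot_improved[OF i])
    fix k assume "(v (A k), k) < (v (A i), i)"
    then have "k \<noteq> i" and "k \<noteq> j" using \<open>v (A i) < v (A j)\<close> by auto
    then show "B k = A k" using Bk by blast
  next
    fix k assume "k \<in> {1..n}" "\<not> (v (A k), k) < (v (A i), i)"
    then show "\<not> (v (B k), k) < (v (A i), i)"
      using above[of k] \<open>v (A i) \<le> v (B i)\<close> by (cases "k = i") auto
  next
    fix k assume "k \<in> {1..n}" "\<not> (v (A k), k) < (v (A i), i)"
    then show "(v (A i), card (A i)) < (v (B k), card (B k))"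
      using above[of k] \<open>v (A i) \<le> v (B i)\<close> \<open>card (A i) < card (B i)\<close>
      by (cases "k = i") auto
  qed
  moreover have "is_allocation n M B"
    unfolding B_def using is_allocation_move_good[OF alloc i j ij g] .
  ultimately show ?thesis unfolding leximinpp_solution_def by auto
qed

lemma leximinpp_solution_is_EFX:
  assumes fin: "finite M" and val: "valuation M v" and sol: "leximinpp_solution n M v A"
  shows "is_EFX n v A"
proof (rule ccontr)
  assume "\<not> is_EFX n v A"
  then obtain i0 j g where i0: "i0 \<in> {1..n}" and j: "j \<in> {1..n}" and g: "g \<in> A j"
    and envy: "v (A i0) < v (A j - {g})"
    unfolding is_EFX_def by force
  obtain i where i: "i \<in> {1..n}" and least: "\<And>k. k \<in> {1..n} \<Longrightarrow> v (A i) \<le> v (A k)"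
    and last: "\<And>k. k \<in> {1..n} \<Longrightarrow> v (A k) = v (A i) \<Longrightarrow> k \<le> i"
    using finite_has_last_minimiser[of "{1..n}" "\<lambda>k. v (A k)"] i0 by blast
  have "v (A i) < v (A j - {g})" using envy least[OF i0] by simp
  moreover have "is_allocation n M A" using sol unfolding leximinpp_solution_def by blast
  ultimately have "\<not> leximinpp_solution n M v A"
    using not_leximinpp_solution_if_last_least_envies[OF fin val _ i least last j g] by blast
  then show False using sol by blast
qed

theorem theorem4p2:
  fixes n :: nat and M :: "'g set" and v :: "'g set \<Rightarrow> real"
  assumes "n \<ge> 1" and "finite M" and "valuation M v"
  shows "(\<forall>A. leximinpp_solution n M v A \<longrightarrow> is_EFX n v A)
         \<and> (\<exists>A. is_allocation n M A \<and> is_EFX n v A)"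
proof -
  have solutions_EFX: "\<forall>A. leximinpp_solution n M v A \<longrightarrow> is_EFX n v A"
    using leximinpp_solution_is_EFX assms(2,3) by blast
  obtain A where "leximinpp_solution n M v A"
    using leximinpp_solution_exists assms(1,2) by blast
  then show ?thesis using solutions_EFX unfolding leximinpp_solution_def by blast
qed

end
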